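(* Let $M\in\mathbb{N}$, $M\ge2$, and let $r$ be a strong solution of the BVP. Then $d(0):=\lim_{R\to0}d(R)=0$, and exactly one of the following occurs: (i) $r$ is a delayed lift-off function, i.e. there exists $0<\delta<1$ with $r\equiv0$ on $[0,\delta]$; in this case $r\in C^\infty([0,1])$; (ii) $r$ lifts off immediately, i.e. $r>0$ and $\dot r>0$ on $(0,1]$; in this case $r\in C^1([0,1])$ and $\dot r(0)=0$.
   Context: Fix constants $\gamma>0$, $s_0\ge0$, $\kappa\ge-\gamma s_0$ and a convex function $\rho\in C^\infty(\mathbb{R})$ with $\rho(s)=0$ for $s\le0$, $\rho(s)=\gamma s+\kappa$ for $s\ge s_0$, and $\rho=\rho_1$ on $[0,s_0]$ where $\rho_1$ is smooth and convex with $\rho_1(0)=0$, $\rho_1(s_0)=\gamma s_0+\kappa$. For $M\in\mathbb{N}\setminus\{0\}$ and a function $r$ on $(0,1]$ let $d(R)=\frac{Mr(R)\dot r(R)}{R}$ and $Lr(R)=\frac{M^2r}{R}-\dot r-R\ddot r$. A strong solution of the BVP is a function $r\in C([0,1])\cap C^\infty((0,1])$ with $Lr=M\rho''(d)\dot d\,r$ on $(0,1)$, $r(0)=0$ and $r(1)=1$. *)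

theory Defs
  imports "HOL-Analysis.Analysis"
begin

definition smooth_on :: "real set \<Rightarrow> (real \<Rightarrow> real) \<Rightarrow> bool" where
  "smooth_on S f \<longleftrightarrow> (\<exists>D :: nat \<Rightarrow> real \<Rightarrow> real.
      (\<forall>x\<in>S. D 0 x = f x) \<and>
      (\<forall>n. \<forall>x\<in>S. (D n has_real_derivative D (Suc n) x) (at x within S)))"

definition C1_zero_at_0 :: "(real \<Rightarrow> real) \<Rightarrow> bool" where
  "C1_zero_at_0 r \<longleftrightarrow> (\<exists>r'. continuous_on {0..1} r' \<and>
      (\<forall>x\<in>{0..1}. (r has_real_derivative r' x) (at x within {0..1})) \<and> r' 0 = 0)"

definition dfun :: "nat \<Rightarrow> (real \<Rightarrow> real) \<Rightarrow> real \<Rightarrow> real" where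
  "dfun M r R = real M * r R * deriv r R / R"

definition Lop :: "nat \<Rightarrow> (real \<Rightarrow> real) \<Rightarrow> real \<Rightarrow> real" where
  "Lop M r R = (real M)^2 * r R / R - deriv r R - R * deriv (deriv r) R"

definition strong_solution :: "(real \<Rightarrow> real) \<Rightarrow> nat \<Rightarrow> (real \<Rightarrow> real) \<Rightarrow> bool" where
  "strong_solution \<rho> M r \<longleftrightarrow>
     continuous_on {0..1} r \<and> smooth_on {0<..1} r \<and>
     (\<forall>R\<in>{0<..<1}. Lop M r R
        = real M * deriv (deriv \<rho>) (dfun M r R) * deriv (dfun M r) R * r R) \<and>
     r 0 = 0 \<and> r 1 = 1"

end

theory Submission
  imports Defs
begin

text \<open>The ODE can be rewritten as
  \<open>d' (R\<^sup>2/M + M \<rho>''(d) r\<^sup>2) = ((R r' - r)\<^sup>2 + (M\<^sup>2 - 1) r\<^sup>2) / R\<close>, so \<open>d\<close> is nondecreasing since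
  \<open>\<rho>'' \<ge> 0\<close>, and at a critical point of \<open>r\<close> the signs of \<open>r''\<close> and \<open>r\<close> agree. The latter is a
  maximum principle: \<open>r \<ge> 0\<close>, and \<open>r\<close> has no interior maximum while positive. If \<open>r\<close> vanishes at
  some \<open>R\<^sub>1 > 0\<close>, then \<open>d \<le> d(R\<^sub>1) = 0\<close> below \<open>R\<^sub>1\<close>, so \<open>r\<^sup>2\<close> is nonincreasing there and \<open>r\<close>
  vanishes on \<open>[0,R\<^sub>1]\<close>, together with all its derivatives. Otherwise \<open>r > 0\<close> and \<open>r' > 0\<close>.
  In that case \<open>d(0+) = 0\<close>: a lower bound \<open>d \<ge> e > 0\<close> would give \<open>r\<^sup>2 \<approx> R\<^sup>2\<close> and hence
  \<open>d' \<ge> A/R\<close>, forcing \<open>d \<rightarrow> -\<infinity>\<close>. Finally, the ODE is the divergence form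
  \<open>(R r' + M r \<rho>'(d))' = M\<^sup>2 r/R + M r' \<rho>'(d)\<close>, which, combined with \<open>r/R \<le> sqrt (d/M)\<close>,
  bounds \<open>r'\<close> by a multiple of \<open>sqrt d\<close>; hence \<open>r'(0+) = 0\<close>.\<close>

lemma convex_on_deriv_mono:
  fixes f f' :: "real \<Rightarrow> real"
  assumes "convex_on UNIV f" and "\<And>x. (f has_real_derivative f' x) (at x)" and "x \<le> y"
  shows "f' x \<le> f' y"
proof -
  have "f' x * (y - x) \<le> f y - f x" "f' y * (x - y) \<le> f x - f y"
    by (rule convex_on_imp_above_tangent[OF assms(1)]; use assms(2) in simp)+
  then have "0 \<le> (f' y - f' x) * (y - x)" by (simp add: algebra_simps)
  with assms(3) show ?thesis by (cases "x = y") (auto simp: zero_le_mult_iff)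
qed

lemma convex_on_second_deriv_nonneg:
  fixes f f' :: "real \<Rightarrow> real"
  assumes "convex_on UNIV f" and "\<And>x. (f has_real_derivative f' x) (at x)"
    and "(f' has_real_derivative f'') (at x)"
  shows "0 \<le> f''"
proof (rule ccontr)
  assume "\<not> 0 \<le> f''"
  then obtain e where "0 < e" "\<forall>h>0. h < e \<longrightarrow> f' (x + h) < f' x"
    using DERIV_neg_dec_right[OF assms(3)] by force
  then have "f' (x + e/2) < f' x" by simp
  with convex_on_deriv_mono[OF assms(1,2), of x "x + e/2"] \<open>0 < e\<close> show False by simp
qed

lemma greater_left_of_critical_point:
  fixes f f' :: "real \<Rightarrow> real"
  assumes "a < m"
    and f': "\<And>y. a < y \<Longrightarrow> y \<le> m \<Longrightarrow> (f has_real_derivative f' y) (at y)"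
    and "f' m = 0" and "(f' has_real_derivative q) (at m)" and "0 < q"
  shows "\<exists>y\<in>{a<..<m}. f m < f y"
proof -
  obtain e where e: "0 < e" "\<forall>h>0. h < e \<longrightarrow> f' (m - h) < f' m"
    using DERIV_pos_inc_left[OF assms(4,5)] by blast
  define y where "y = m - min e (m - a) / 2"
  have y: "a < y" "y < m" "m - y < e"
    using e(1) assms(1) unfolding y_def by (auto simp: min_def field_simps)
  have "f m < f y"
  proof (rule DERIV_neg_imp_decreasing_open[OF \<open>y < m\<close>])
    show "continuous_on {y..m} f"
      using y by (intro continuous_at_imp_continuous_on ballI DERIV_isCont[OF f']) auto
    fix z assume "y < z" "z < m"
    with y e(2)[rule_format, of "m - z"] \<open>f' m = 0\<close> have "f' z < 0" by simp
    with f'[of z] \<open>y < z\<close> \<open>z < m\<close> y show "\<exists>l. (f has_real_derivative l) (at z) \<and> l < 0"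
      by (intro exI[of _ "f' z"]) auto
  qed
  with y show ?thesis by auto
qed

text \<open>\<open>f - A ln y\<close> is nondecreasing and \<open>ln y \<rightarrow> -\<infinity>\<close>.\<close>

lemma unbounded_arbitrarily_small_if_deriv_ge_inverse:
  fixes f f' :: "real \<Rightarrow> real"
  assumes "0 < b" and "0 < A" and "continuous_on {0<..b} f"
    and "\<And>y. 0 < y \<Longrightarrow> y < b \<Longrightarrow> (f has_real_derivative f' y) (at y)"
    and "\<And>y. 0 < y \<Longrightarrow> y < b \<Longrightarrow> A / y \<le> f' y"
  shows "\<exists>x\<in>{0<..b}. f x < c"
proof -
  define E where "E = exp ((c - f b) / A)"
  define x where "x = min (b / 2) (b * E / 2)"
  have "0 < b * E" using assms(1) by (simp add: E_def)
  then have x: "0 < x" "x < b" "x < b * E"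
    using assms(1) unfolding x_def by auto
  have mono: "f x - A * ln x \<le> f b - A * ln b"
  proof (rule DERIV_nonneg_imp_increasing_open[where f = "\<lambda>y. f y - A * ln y"])
    show "continuous_on {x..b} (\<lambda>y. f y - A * ln y)"
      using x by (intro continuous_intros continuous_on_subset[OF assms(3)]) auto
    fix y assume y: "x < y" "y < b"
    with x have "0 < y" by simp
    have "((\<lambda>y. f y - A * ln y) has_real_derivative f' y - A * (1 / y)) (at y)"
      using assms(4)[OF \<open>0 < y\<close> \<open>y < b\<close>] \<open>0 < y\<close> by (auto intro!: derivative_eq_intros)
    moreover have "0 \<le> f' y - A * (1 / y)" using assms(5)[OF \<open>0 < y\<close> \<open>y < b\<close>] by simp
    ultimately show "\<exists>l. ((\<lambda>y. f y - A * ln y) has_real_derivative l) (at y) \<and> 0 \<le> l" by blast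
  qed (use x in simp)
  have "ln x < ln b + (c - f b) / A"
  proof -
    have "ln x < ln (b * E)" using x by simp
    also have "\<dots> = ln b + (c - f b) / A" using assms(1) by (simp add: E_def ln_mult)
    finally show ?thesis .
  qed
  then have "A * ln x < A * (ln b + (c - f b) / A)"
    using assms(2) by (rule mult_strict_left_mono)
  also have "\<dots> = A * ln b + (c - f b)"
    using assms(2) by (simp add: distrib_left)
  finally have "f x < c" using mono by linarith
  with x show ?thesis by auto
qed

lemma at_within_Icc_eq_at_within_Ioc:
  fixes x b :: real
  assumes "0 < x"
  shows "at x within {0..b} = at x within {0<..b}"
  by (rule at_within_nhd[of x "{0<..}"]) (use assms in auto)

text \<open>\<open>D\<rho>\<close> and \<open>Dr\<close> are the derivative sequences witnessing smoothness of \<open>\<rho>\<close> on \<open>\<real>\<close> and of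
  \<open>r\<close> on \<open>(0,1]\<close>. First derivatives are written \<open>D (Suc 0)\<close>, the simp normal form of \<open>D 1\<close>.\<close>

locale bvp_solution =
  fixes \<rho> :: "real \<Rightarrow> real" and M :: nat and r :: "real \<Rightarrow> real"
    and D\<rho> Dr :: "nat \<Rightarrow> real \<Rightarrow> real"
  assumes M_ge_2: "M \<ge> 2"
    and convex_rho: "convex_on UNIV \<rho>"
    and D\<rho>_0: "D\<rho> 0 = \<rho>"
    and D\<rho>_Suc: "\<And>n x. (D\<rho> n has_real_derivative D\<rho> (Suc n) x) (at x)"
    and Dr_0: "\<And>x. x \<in> {0<..1} \<Longrightarrow> Dr 0 x = r x"
    and Dr_Suc: "\<And>n x. x \<in> {0<..1} \<Longrightarrow>
      (Dr n has_real_derivative Dr (Suc n) x) (at x within {0<..1})"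
    and continuous_r: "continuous_on {0..1} r"
    and r_0: "r 0 = 0" and r_1: "r 1 = 1"
    and ode: "\<And>R. R \<in> {0<..<1} \<Longrightarrow>
      Lop M r R = real M * deriv (deriv \<rho>) (dfun M r R) * deriv (dfun M r) R * r R"
begin

abbreviation "\<rho>' \<equiv> D\<rho> (Suc 0)"
abbreviation "\<rho>'' \<equiv> D\<rho> 2"
abbreviation "r' \<equiv> Dr (Suc 0)"
abbreviation "r'' \<equiv> Dr 2"

lemma M_pos: "0 < real M"
  using M_ge_2 by simp

lemma rho_has_deriv: "(\<rho> has_real_derivative \<rho>' x) (at x)"
  using D\<rho>_Suc[of 0 x] by (simp add: D\<rho>_0)

lemma rho'_has_deriv: "(\<rho>' has_real_derivative \<rho>'' x) (at x)"
  using D\<rho>_Suc[of "Suc 0" x] by (simp add: numeral_2_eq_2)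

lemma isCont_rho'': "isCont \<rho>'' x"
  using D\<rho>_Suc[of 2 x] by (rule DERIV_isCont)

lemma deriv_deriv_rho: "deriv (deriv \<rho>) = \<rho>''"
proof -
  have "deriv \<rho> = \<rho>'" by (intro ext DERIV_imp_deriv rho_has_deriv)
  moreover have "deriv \<rho>' = \<rho>''" by (intro ext DERIV_imp_deriv rho'_has_deriv)
  ultimately show ?thesis by simp
qed

lemma rho'_mono: "x \<le> y \<Longrightarrow> \<rho>' x \<le> \<rho>' y"
  by (rule convex_on_deriv_mono[where f' = \<rho>', OF convex_rho rho_has_deriv])

lemma rho''_nonneg: "0 \<le> \<rho>'' x"
  by (rule convex_on_second_deriv_nonneg[where f' = \<rho>', OF convex_rho rho_has_deriv rho'_has_deriv])

lemma Dr_has_deriv: assumes "x \<in> {0<..<1}"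
  shows "(Dr n has_real_derivative Dr (Suc n) x) (at x)"
proof -
  have "at x within {0<..1} = at x"
    using assms by (intro at_within_interior) simp
  with Dr_Suc[of x n] assms show ?thesis by simp
qed

lemma continuous_on_Dr: "continuous_on {0<..1} (Dr n)"
  by (rule DERIV_continuous_on[where D = "Dr (Suc n)"], rule Dr_Suc)

lemma r_has_deriv: assumes "x \<in> {0<..<1}" shows "(r has_real_derivative r' x) (at x)"
proof (rule has_field_derivative_transform_within_open[of "Dr 0" _ _ "{0<..<1}"])
  show "(Dr 0 has_real_derivative r' x) (at x)" using Dr_has_deriv[OF assms, of 0] by simp
qed (use assms Dr_0 in auto)

lemma r'_has_deriv: "x \<in> {0<..<1} \<Longrightarrow> (r' has_real_derivative r'' x) (at x)"
  using Dr_has_deriv[of x "Suc 0"] by (simp add: numeral_2_eq_2)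

lemma r_has_deriv_within:
  assumes "x \<in> {0<..1}" shows "(r has_real_derivative r' x) (at x within {0..1})"
proof -
  have "(Dr 0 has_real_derivative r' x) (at x within {0<..1})"
    using Dr_Suc[OF assms, of 0] by simp
  then have "(r has_real_derivative r' x) (at x within {0<..1})"
    by (rule has_field_derivative_transform_within[where d = 1]) (use assms Dr_0 in auto)
  then show ?thesis using assms by (simp add: at_within_Icc_eq_at_within_Ioc)
qed

lemma deriv_r: "x \<in> {0<..<1} \<Longrightarrow> deriv r x = r' x"
  using r_has_deriv by (rule DERIV_imp_deriv)

lemma deriv_deriv_r: assumes "x \<in> {0<..<1}" shows "deriv (deriv r) x = r'' x"
proof -
  have "(deriv r has_real_derivative r'' x) (at x)"
    by (rule has_field_derivative_transform_within_open[OF r'_has_deriv[OF assms], of "{0<..<1}"])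
       (use assms deriv_r in auto)
  then show ?thesis using DERIV_imp_deriv by blast
qed

definition d :: "real \<Rightarrow> real" where
  "d x = real M * r x * r' x / x"

definition d' :: "real \<Rightarrow> real" where
  "d' x = real M * (r' x ^ 2 + r x * r'' x) / x - real M * r x * r' x / x ^ 2"

lemma d_has_deriv: assumes "x \<in> {0<..<1}" shows "(d has_real_derivative d' x) (at x)"
  unfolding d_def[abs_def]
  using assms by (auto intro!: derivative_eq_intros r_has_deriv r'_has_deriv
      simp: d'_def field_simps power2_eq_square)

lemma continuous_on_d: "continuous_on {0<..1} d"
  unfolding d_def[abs_def]
  by (intro continuous_intros continuous_on_Dr continuous_on_subset[OF continuous_r]) auto

lemma dfun_eq_d: "x \<in> {0<..<1} \<Longrightarrow> dfun M r x = d x"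
  by (simp add: dfun_def d_def deriv_r)

lemma deriv_dfun: assumes "x \<in> {0<..<1}" shows "deriv (dfun M r) x = d' x"
proof -
  have "(dfun M r has_real_derivative d' x) (at x)"
    by (rule has_field_derivative_transform_within_open[OF d_has_deriv[OF assms], of "{0<..<1}"])
       (use assms dfun_eq_d in auto)
  then show ?thesis using DERIV_imp_deriv by blast
qed

lemma ode_explicit: assumes "x \<in> {0<..<1}"
  shows "real M ^ 2 * r x / x - r' x - x * r'' x = real M * \<rho>'' (d x) * d' x * r x"
  using ode[OF assms] assms
  by (simp add: Lop_def deriv_r deriv_deriv_r deriv_deriv_rho dfun_eq_d deriv_dfun)

lemma d'_identity: assumes "x \<in> {0<..<1}"
  shows "d' x * (x\<^sup>2 / M + M * \<rho>'' (d x) * r x ^ 2)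
    = ((x * r' x - r x)\<^sup>2 + (real M ^ 2 - 1) * r x ^ 2) / x"
proof -
  have "d' x * (x\<^sup>2 / M + M * \<rho>'' (d x) * r x ^ 2)
      = x * (r' x ^ 2 + r x * r'' x) - r x * r' x + r x * (real M * \<rho>'' (d x) * d' x * r x)"
    using assms M_pos by (simp add: d'_def field_simps power2_eq_square)
  also have "\<dots> = x * (r' x ^ 2 + r x * r'' x) - r x * r' x
      + r x * (real M ^ 2 * r x / x - r' x - x * r'' x)"
    by (simp only: ode_explicit[OF assms])
  also have "\<dots> = ((x * r' x - r x)\<^sup>2 + (real M ^ 2 - 1) * r x ^ 2) / x"
    using assms by (simp add: field_simps power2_eq_square)
  finally show ?thesis .
qed

lemma d'_nonneg: assumes "x \<in> {0<..<1}" shows "0 \<le> d' x"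
proof -
  have "1 \<le> real M ^ 2" using M_ge_2 by simp
  with assms have "0 \<le> ((x * r' x - r x)\<^sup>2 + (real M ^ 2 - 1) * r x ^ 2) / x" by simp
  moreover have "0 < x\<^sup>2 / M + M * \<rho>'' (d x) * r x ^ 2"
    using assms M_pos rho''_nonneg[of "d x"] by (intro add_pos_nonneg) auto
  ultimately show ?thesis using d'_identity[OF assms] by (metis zero_le_mult_iff not_le)
qed

lemma d_mono: assumes "0 < x" "x \<le> y" "y < 1" shows "d x \<le> d y"
proof (rule DERIV_nonneg_imp_increasing_open[where f = d, OF assms(2)])
  fix z assume "x < z" "z < y"
  with assms have z: "z \<in> {0<..<1}" by auto
  show "\<exists>l. (d has_real_derivative l) (at z) \<and> 0 \<le> l"
    using d_has_deriv[OF z] d'_nonneg[OF z] by blast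
next
  show "continuous_on {x..y} d"
    using assms by (intro continuous_on_subset[OF continuous_on_d]) auto
qed

lemma r''_at_critical_point: assumes "x \<in> {0<..<1}" and "r' x = 0"
  shows "r'' x = real M ^ 2 * r x / (x\<^sup>2 + M\<^sup>2 * \<rho>'' (d x) * r x ^ 2)"
    and "0 < x\<^sup>2 + M\<^sup>2 * \<rho>'' (d x) * r x ^ 2"
proof -
  show pos: "0 < x\<^sup>2 + M\<^sup>2 * \<rho>'' (d x) * r x ^ 2"
    using assms rho''_nonneg[of "d x"] by (intro add_pos_nonneg) auto
  have "d' x = M * r x * r'' x / x" using assms(2) by (simp add: d'_def power2_eq_square)
  then have "real M ^ 2 * r x / x - x * r'' x = real M * \<rho>'' (d x) * (M * r x * r'' x / x) * r x"
    using ode_explicit[OF assms(1)] assms(2) by simp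
  then have "r'' x * (x\<^sup>2 + M\<^sup>2 * \<rho>'' (d x) * r x ^ 2) = M\<^sup>2 * r x"
    using assms(1) by (simp add: field_simps power2_eq_square)
  with pos show "r'' x = real M ^ 2 * r x / (x\<^sup>2 + M\<^sup>2 * \<rho>'' (d x) * r x ^ 2)"
    by (simp add: eq_divide_eq)
qed

lemma r_nonneg: assumes "x \<in> {0..1}" shows "0 \<le> r x"
proof (rule ccontr)
  assume "\<not> 0 \<le> r x"
  obtain m where m: "m \<in> {0..1}" "\<And>y. y \<in> {0..1} \<Longrightarrow> r m \<le> r y"
    using continuous_attains_inf[OF compact_Icc _ continuous_r] by auto
  with assms \<open>\<not> 0 \<le> r x\<close> have "r m < 0" by force
  with m(1) r_0 r_1 have m_in: "m \<in> {0<..<1}" by (cases "m = 0 \<or> m = 1") auto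
  have "r' m = 0"
    by (rule DERIV_local_min[OF r_has_deriv[OF m_in], of "min m (1 - m)"])
       (use m_in in \<open>auto simp: abs_less_iff intro!: m(2)\<close>)
  have "r'' m < 0"
    using r''_at_critical_point[OF m_in \<open>r' m = 0\<close>] \<open>r m < 0\<close> M_pos
    by (simp add: divide_neg_pos mult_pos_neg)
  have "\<exists>y\<in>{0<..<m}. - r m < - r y"
  proof (rule greater_left_of_critical_point[where f = "\<lambda>y. - r y" and f' = "\<lambda>y. - r' y"])
    show "((\<lambda>y. - r y) has_real_derivative - r' y) (at y)" if "0 < y" "y \<le> m" for y
      using that m_in by (intro DERIV_minus r_has_deriv) auto
    show "((\<lambda>y. - r' y) has_real_derivative - r'' m) (at m)"
      using m_in by (intro DERIV_minus r'_has_deriv)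
  qed (use m_in \<open>r' m = 0\<close> \<open>r'' m < 0\<close> in auto)
  then obtain y where "y \<in> {0<..<m}" "r y < r m" by auto
  with m(2)[of y] m_in show False by simp
qed

lemma parabola_minus_r_sq_has_deriv: assumes "x \<in> {0<..<1}"
  shows "((\<lambda>y. a * y\<^sup>2 / M - r y ^ 2) has_real_derivative 2 * x * (a - d x) / M) (at x)"
  using assms M_pos
  by (auto intro!: derivative_eq_intros r_has_deriv simp: d_def field_simps power2_eq_square)

lemma r_sq_le_d: assumes "x0 \<in> {0<..<1}" "0 < x" "x \<le> x0"
  shows "r x ^ 2 \<le> d x0 * x\<^sup>2 / M"
proof -
  have "d x0 * 0\<^sup>2 / M - r 0 ^ 2 \<le> d x0 * x\<^sup>2 / M - r x ^ 2"
  proof (rule DERIV_nonneg_imp_increasing_open[where f = "\<lambda>y. d x0 * y\<^sup>2 / M - r y ^ 2"])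
    show "continuous_on {0..x} (\<lambda>y. d x0 * y\<^sup>2 / M - r y ^ 2)"
      using assms M_pos by (intro continuous_intros continuous_on_subset[OF continuous_r]) auto
    fix y assume "0 < y" "y < x"
    with assms have y: "y \<in> {0<..<1}" "d y \<le> d x0" by (auto intro: d_mono)
    then have "0 \<le> 2 * y * (d x0 - d y) / M" using M_pos by simp
    with parabola_minus_r_sq_has_deriv[OF y(1)]
    show "\<exists>l. ((\<lambda>y. d x0 * y\<^sup>2 / M - r y ^ 2) has_real_derivative l) (at y) \<and> 0 \<le> l"
      by blast
  qed (use assms in simp)
  then show ?thesis using r_0 by simp
qed

lemma r_vanishes_below_zero:
  assumes R1: "R1 \<in> {0<..<1}" "r R1 = 0" and x: "x \<in> {0..R1}"
  shows "r x = 0"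
proof (cases "x = 0")
  case False
  with x R1 have "r x ^ 2 \<le> d R1 * x\<^sup>2 / M" by (intro r_sq_le_d) auto
  moreover have "d R1 = 0" using R1 by (simp add: d_def)
  ultimately show ?thesis by simp
qed (simp add: r_0)

lemma delayed_or_positive:
  "(\<exists>\<delta>. 0 < \<delta> \<and> \<delta> < 1 \<and> (\<forall>R\<in>{0..\<delta>}. r R = 0)) \<or> (\<forall>x\<in>{0<..1}. 0 < r x)"
proof (rule disjCI)
  assume "\<not> (\<forall>x\<in>{0<..1}. 0 < r x)"
  then obtain x where x: "x \<in> {0<..1}" "r x \<le> 0" by auto
  with r_nonneg[of x] have "r x = 0" by auto
  with x r_1 have "x \<in> {0<..<1}" by (cases "x = 1") auto
  with r_vanishes_below_zero[OF _ \<open>r x = 0\<close>]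
  show "\<exists>\<delta>. 0 < \<delta> \<and> \<delta> < 1 \<and> (\<forall>R\<in>{0..\<delta>}. r R = 0)"
    by (intro exI[of _ x]) auto
qed

lemma Dr_vanishes_if_delayed:
  assumes "\<delta> \<le> 1" and "\<forall>R\<in>{0<..<\<delta>}. r R = 0" and "x \<in> {0<..<\<delta>}"
  shows "Dr n x = 0"
  using assms(3)
proof (induction n arbitrary: x)
  case 0
  then show ?case using assms Dr_0 by auto
next
  case (Suc n)
  show ?case
  proof (rule DERIV_local_const[OF Dr_has_deriv])
    show "\<forall>y. \<bar>x - y\<bar> < min x (\<delta> - x) \<longrightarrow> Dr n x = Dr n y"
    proof (intro allI impI)
      fix y assume "\<bar>x - y\<bar> < min x (\<delta> - x)"
      then have "y \<in> {0<..<\<delta>}" by (auto simp: abs_less_iff)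
      with Suc.IH Suc.prems show "Dr n x = Dr n y" by simp
    qed
  qed (use Suc.prems assms(1) in auto)
qed

lemma smooth_on_if_delayed:
  assumes "0 < \<delta>" "\<delta> < 1" and "\<forall>R\<in>{0..\<delta>}. r R = 0"
  shows "smooth_on {0..1} r"
proof -
  define D where "D n x = (if x \<le> 0 then 0 else Dr n x)" for n x
  have D_vanishes: "D n y = 0" if "y < \<delta>" for n y
    using Dr_vanishes_if_delayed[of \<delta> y n] assms that by (auto simp: D_def)
  have "D 0 x = r x" if "x \<in> {0..1}" for x
    using that r_0 Dr_0 by (cases "x = 0") (auto simp: D_def)
  moreover have "(D n has_real_derivative D (Suc n) x) (at x within {0..1})" if "x \<in> {0..1}" for n x
  proof (cases "x = 0")
    case True
    have "((\<lambda>_. 0) has_real_derivative 0) (at 0 within {0..1})" by simp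
    then have "(D n has_real_derivative 0) (at 0 within {0..1})"
      by (rule has_field_derivative_transform_within[where d = \<delta>])
         (use assms D_vanishes in \<open>auto simp: dist_real_def\<close>)
    with True show ?thesis by (simp add: D_def)
  next
    case False
    with that have x: "x \<in> {0<..1}" by auto
    have "(D n has_real_derivative Dr (Suc n) x) (at x within {0<..1})"
      by (rule has_field_derivative_transform_within[OF Dr_Suc[OF x], where d = 1])
         (use x in \<open>auto simp: D_def\<close>)
    with x show ?thesis by (simp add: D_def at_within_Icc_eq_at_within_Ioc)
  qed
  ultimately show ?thesis unfolding smooth_on_def by blast
qed

lemma dfun_tendsto_0_if_delayed:
  assumes "0 < \<delta>" and "\<forall>R\<in>{0..\<delta>}. r R = 0"
  shows "(dfun M r \<longlongrightarrow> 0) (at_right 0)"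
proof -
  have "eventually (\<lambda>x. dfun M r x = 0) (at_right 0)"
    unfolding eventually_at_right_field using assms by (auto simp: dfun_def)
  then show ?thesis by (rule tendsto_eventually)
qed

lemma r_sq_ge_if_d_ge: assumes "\<And>y. y \<in> {0<..<1} \<Longrightarrow> e \<le> d y" and "x \<in> {0<..<1}"
  shows "e * x\<^sup>2 / M \<le> r x ^ 2"
proof -
  have "- (e * 0\<^sup>2 / M - r 0 ^ 2) \<le> - (e * x\<^sup>2 / M - r x ^ 2)"
  proof (rule DERIV_nonneg_imp_increasing_open[where f = "\<lambda>y. - (e * y\<^sup>2 / M - r y ^ 2)"])
    show "continuous_on {0..x} (\<lambda>y. - (e * y\<^sup>2 / M - r y ^ 2))"
      using assms(2) M_pos by (intro continuous_intros continuous_on_subset[OF continuous_r]) auto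
    fix y assume "0 < y" "y < x"
    with assms have y: "y \<in> {0<..<1}" "e \<le> d y" by auto
    then have "2 * y * (e - d y) / M \<le> 0"
      using M_pos by (intro divide_nonpos_pos mult_nonneg_nonpos) auto
    with DERIV_minus[OF parabola_minus_r_sq_has_deriv[OF y(1), of e]]
    show "\<exists>l. ((\<lambda>y. - (e * y\<^sup>2 / M - r y ^ 2)) has_real_derivative l) (at y) \<and> 0 \<le> l"
      by (intro exI conjI) auto
  qed (use assms(2) in simp)
  then show ?thesis using r_0 by simp
qed

lemma r_div_le_sqrt_d: assumes "x0 \<in> {0<..<1}" "0 < x" "x \<le> x0"
  shows "r x / x \<le> sqrt (d x0 / M)"
proof (rule real_le_rsqrt)
  have "(r x / x)\<^sup>2 = r x ^ 2 / x\<^sup>2" by (simp add: power_divide)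
  also have "\<dots> \<le> (d x0 * x\<^sup>2 / M) / x\<^sup>2"
    using r_sq_le_d[OF assms] assms(2) by (intro divide_right_mono) auto
  also have "\<dots> = d x0 / M" using assms(2) by simp
  finally show "(r x / x)\<^sup>2 \<le> d x0 / M" .
qed

text \<open>A positive lower bound on \<open>d\<close> makes \<open>r\<close> comparable to \<open>R\<close>, so that \<open>d'_identity\<close>
  gives \<open>d' \<ge> A/R\<close>.\<close>

lemma d'_ge_inverse_if_d_ge:
  assumes "0 < e" and d_ge: "\<And>y. y \<in> {0<..<1} \<Longrightarrow> e \<le> d y"
  shows "\<exists>A>0. \<forall>y\<in>{0<..<1/2}. A / y \<le> d' y"
proof -
  define D where "D = d (1/2)"
  have "e \<le> D" using d_ge by (simp add: D_def)
  have "continuous_on {0..D} \<rho>''"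
    by (intro continuous_at_imp_continuous_on ballI isCont_rho'')
  moreover have "{0..D} \<noteq> {}" using \<open>0 < e\<close> \<open>e \<le> D\<close> by simp
  ultimately obtain k where k: "\<forall>s\<in>{0..D}. \<rho>'' s \<le> \<rho>'' k"
    using continuous_attains_sup[OF compact_Icc, of 0 D "\<rho>''"] by blast
  define W where "W = 1 / M + \<rho>'' k * D"
  have "0 < W" using M_pos \<open>0 < e\<close> \<open>e \<le> D\<close> rho''_nonneg[of k] by (simp add: W_def add_pos_nonneg)
  have "2 * 2 \<le> real M * real M" using M_ge_2 by (intro mult_mono) auto
  then have M2: "0 < real M ^ 2 - 1" by (simp add: power2_eq_square)
  define A where "A = (real M ^ 2 - 1) * e / (M * W)"
  have "A / y \<le> d' y" if y: "y \<in> {0<..<1/2}" for y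
  proof -
    have y1: "y \<in> {0<..<1}" using y by simp
    have "e \<le> d y" "d y \<le> D" using d_ge[OF y1] d_mono[of y "1/2"] y by (auto simp: D_def)
    then have "\<rho>'' (d y) \<le> \<rho>'' k" using k \<open>0 < e\<close> by auto
    moreover have "r y ^ 2 \<le> D * y\<^sup>2 / M" using r_sq_le_d[of "1/2" y] y by (simp add: D_def)
    ultimately have "M * \<rho>'' (d y) * r y ^ 2 \<le> M * \<rho>'' k * (D * y\<^sup>2 / M)"
      using M_pos rho''_nonneg by (intro mult_mono) auto
    then have den: "y\<^sup>2 / M + M * \<rho>'' (d y) * r y ^ 2 \<le> y\<^sup>2 * W"
      using M_pos by (simp add: W_def algebra_simps)
    have "(real M ^ 2 - 1) * e * y / M = (real M ^ 2 - 1) * (e * y\<^sup>2 / M) / y"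
      using y by (simp add: power2_eq_square)
    also have "\<dots> \<le> (real M ^ 2 - 1) * r y ^ 2 / y"
      using M2 y r_sq_ge_if_d_ge[OF d_ge y1] by (intro divide_right_mono mult_left_mono) auto
    also have "\<dots> \<le> ((y * r' y - r y)\<^sup>2 + (real M ^ 2 - 1) * r y ^ 2) / y"
      using y by (intro divide_right_mono) auto
    also have "\<dots> \<le> d' y * (y\<^sup>2 * W)"
      using d'_identity[OF y1] mult_left_mono[OF den d'_nonneg[OF y1]] by simp
    finally have bound: "(real M ^ 2 - 1) * e * y / M \<le> d' y * (y\<^sup>2 * W)" .
    have "A / y = ((real M ^ 2 - 1) * e * y / M) / (y\<^sup>2 * W)"
      using y \<open>0 < W\<close> M_pos by (simp add: A_def power2_eq_square)
    also have "\<dots> \<le> d' y * (y\<^sup>2 * W) / (y\<^sup>2 * W)"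
      using bound y \<open>0 < W\<close> by (intro divide_right_mono) auto
    also have "\<dots> = d' y" using y \<open>0 < W\<close> by simp
    finally show ?thesis .
  qed
  moreover have "0 < A" using M2 \<open>0 < e\<close> \<open>0 < W\<close> M_pos by (simp add: A_def)
  ultimately show ?thesis by blast
qed

lemma d_arbitrarily_small: assumes "0 < e" shows "\<exists>x\<in>{0<..<1}. d x < e"
proof (rule ccontr)
  assume "\<not> ?thesis"
  then have d_ge: "\<And>y. y \<in> {0<..<1} \<Longrightarrow> e \<le> d y" by force
  obtain A where A: "0 < A" "\<forall>y\<in>{0<..<1/2}. A / y \<le> d' y"
    using d'_ge_inverse_if_d_ge[OF assms d_ge] by blast
  have "\<exists>x\<in>{0<..1/2}. d x < e"
  proof (rule unbounded_arbitrarily_small_if_deriv_ge_inverse[where f = d and f' = d' and A = A])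
    show "continuous_on {0<..1/2} d" by (rule continuous_on_subset[OF continuous_on_d]) auto
  qed (use A d_has_deriv in auto)
  with d_ge show False by fastforce
qed

definition flux :: "real \<Rightarrow> real" where
  "flux y = y * r' y + M * r y * \<rho>' (d y)"

lemma flux_has_deriv: assumes "x \<in> {0<..<1}"
  shows "(flux has_real_derivative real M ^ 2 * r x / x + M * r' x * \<rho>' (d x)) (at x)"
proof -
  have deriv: "(flux has_real_derivative (1 * r' x + r'' x * x)
      + (real M * r' x * \<rho>' (d x) + \<rho>'' (d x) * d' x * (real M * r x))) (at x)"
    unfolding flux_def[abs_def]
    by (intro DERIV_add DERIV_mult DERIV_cmult DERIV_ident r_has_deriv r'_has_deriv
        DERIV_chain2[OF rho'_has_deriv d_has_deriv] assms)
  have eq: "(1 * r' x + r'' x * x)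
      + (real M * r' x * \<rho>' (d x) + \<rho>'' (d x) * d' x * (real M * r x))
      = real M ^ 2 * r x / x + M * r' x * \<rho>' (d x)"
    using ode_explicit[OF assms] by (simp add: algebra_simps)
  from DERIV_cong[OF deriv eq] show ?thesis .
qed

end

locale positive_bvp_solution = bvp_solution +
  assumes r_pos: "\<And>x. x \<in> {0<..1} \<Longrightarrow> 0 < r x"
begin

lemma r_greater_left_of_critical_point:
  assumes m: "m \<in> {0<..<1}" and "r' m = 0"
  shows "\<exists>y\<in>{0<..<m}. r m < r y"
proof (rule greater_left_of_critical_point[where f = r and f' = r'])
  have "0 < real M ^ 2 * r m" using M_pos r_pos m by simp
  then show "0 < r'' m"
    unfolding r''_at_critical_point(1)[OF assms]
    using r''_at_critical_point(2)[OF assms] by (rule divide_pos_pos)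
  show "(r has_real_derivative r' y) (at y)" if "0 < y" "y \<le> m" for y
    using that m by (intro r_has_deriv) auto
qed (use m \<open>r' m = 0\<close> r'_has_deriv[OF m] in auto)

text \<open>At a critical point \<open>x\<close>, the maximum of \<open>r\<close> on \<open>[0,x]\<close> is not attained at \<open>x\<close>, so it is
  an interior critical point, which is again impossible.\<close>

lemma r'_nonzero: assumes x: "x \<in> {0<..<1}" shows "r' x \<noteq> 0"
proof
  assume "r' x = 0"
  have "continuous_on {0..x} r" using x by (intro continuous_on_subset[OF continuous_r]) auto
  moreover have "{0..x} \<noteq> {}" using x by simp
  ultimately obtain m where m: "m \<in> {0..x}" "\<And>z. z \<in> {0..x} \<Longrightarrow> r z \<le> r m"
    using continuous_attains_sup[OF compact_Icc, of 0 x r] by blast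
  obtain y where y: "y \<in> {0<..<x}" "r x < r y"
    using r_greater_left_of_critical_point[OF x \<open>r' x = 0\<close>] by blast
  have "r x < r m" using m(2)[of y] y by simp
  moreover have "0 < r x" using x r_pos by simp
  ultimately have "m \<noteq> 0" "m \<noteq> x" using r_0 by auto
  with m(1) x have m_in: "m \<in> {0<..<x}" "m \<in> {0<..<1}" by auto
  have "r' m = 0"
    by (rule DERIV_local_max[OF r_has_deriv[OF m_in(2)], of "min m (x - m)"])
       (use m_in in \<open>auto simp: abs_less_iff intro!: m(2)\<close>)
  then obtain z where "z \<in> {0<..<m}" "r m < r z"
    using r_greater_left_of_critical_point[OF m_in(2)] by blast
  with m(2)[of z] m_in show False by simp
qed

lemma r'_pos: assumes x: "x \<in> {0<..<1}" shows "0 < r' x"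
proof (rule ccontr)
  assume "\<not> 0 < r' x"
  with r'_nonzero[OF x] have "r' x < 0" by simp
  have "r differentiable (at y)" if "0 < y" "y < 1" for y
    using r_has_deriv[of y] that real_differentiable_def by auto
  then obtain l z where z: "0 < z" "z < 1" "(r has_real_derivative l) (at z)" "r 1 - r 0 = (1 - 0) * l"
    using MVT[OF zero_less_one continuous_r] by blast
  have "l = r' z" using DERIV_unique[OF z(3) r_has_deriv] z by simp
  with z r_0 r_1 have rz: "r' z = 1" by simp
  have "\<exists>w\<in>{0<..<1}. r' w = 0"
  proof (cases "x \<le> z")
    case True
    have "continuous_on {x..z} r'" using x z by (intro continuous_on_subset[OF continuous_on_Dr]) auto
    then obtain w where "x \<le> w" "w \<le> z" "r' w = 0"
      using IVT'[of r' x 0 z] True \<open>r' x < 0\<close> rz by auto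
    with x z show ?thesis by (intro bexI[of _ w]) auto
  next
    case False
    have "continuous_on {z..x} r'" using x z by (intro continuous_on_subset[OF continuous_on_Dr]) auto
    then obtain w where "z \<le> w" "w \<le> x" "r' w = 0"
      using IVT2'[of r' x 0 z] False \<open>r' x < 0\<close> rz by auto
    with x z show ?thesis by (intro bexI[of _ w]) auto
  qed
  with r'_nonzero show False by blast
qed

lemma d_pos: "x \<in> {0<..<1} \<Longrightarrow> 0 < d x"
  using r_pos r'_pos M_pos by (simp add: d_def)

lemma r'_1_pos: "0 < r' 1"
proof -
  have "d (1/2) \<le> d 1"
  proof (rule continuous_ge_on_closure[where S = "{1/2..<1}" and f = d])
    show "continuous_on (closure {1/2..<1}) d"
      by (auto intro: continuous_on_subset[OF continuous_on_d])
  qed (auto intro: d_mono)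
  with d_pos[of "1/2"] have "0 < d 1" by simp
  then show ?thesis using r_1 M_pos by (simp add: d_def zero_less_mult_iff)
qed

lemma lifts_off: "\<forall>R\<in>{0<..1}. 0 < r R \<and> (\<exists>D>0. (r has_real_derivative D) (at R within {0..1}))"
proof
  fix R :: real assume R: "R \<in> {0<..1}"
  have "0 < r' R" using r'_pos r'_1_pos R by (cases "R = 1") auto
  with R r_pos r_has_deriv_within show "0 < r R \<and> (\<exists>D>0. (r has_real_derivative D) (at R within {0..1}))"
    by blast
qed

lemma d_tendsto_0: "(d \<longlongrightarrow> 0) (at_right 0)"
proof (rule tendstoI)
  fix e :: real assume "0 < e"
  then obtain x0 where x0: "x0 \<in> {0<..<1}" "d x0 < e" using d_arbitrarily_small by blast
  have "dist (d y) 0 < e" if "0 < y" "y < x0" for y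
    using d_pos[of y] d_mono[of y x0] that x0 by auto
  with x0 show "\<forall>\<^sub>F x in at_right 0. dist (d x) 0 < e"
    unfolding eventually_at_right_field by auto
qed

lemma dfun_tendsto_0: "(dfun M r \<longlongrightarrow> 0) (at_right 0)"
proof -
  have "\<forall>\<^sub>F x in at_right 0. d x = dfun M r x"
    using eventually_at_right_real[OF zero_less_one] by eventually_elim (simp add: dfun_eq_d)
  with d_tendsto_0 show ?thesis by (rule tendsto_cong[THEN iffD1, rotated])
qed

lemma sqrt_d_tendsto_0: "((\<lambda>x. sqrt (d x / M)) \<longlongrightarrow> 0) (at_right 0)"
  using tendsto_real_sqrt[OF tendsto_divide[OF d_tendsto_0 tendsto_const[of "real M"]]] M_pos by simp

text \<open>With \<open>B = M\<^sup>2 sqrt (d(R\<^sub>0)/M)\<close>, the function \<open>flux - M \<rho>'(d(R\<^sub>0)) r - B R\<close> is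
  nonincreasing on \<open>(0,R\<^sub>0]\<close>, because \<open>r/R \<le> sqrt (d(R\<^sub>0)/M)\<close> and \<open>\<rho>' \<circ> d\<close> is nondecreasing.\<close>

lemma flux_excess_ge:
  assumes R0: "R0 \<in> {0<..<1}" and y: "0 < y" "y \<le> R0"
  defines "B \<equiv> real M ^ 2 * sqrt (d R0 / M)"
  shows "R0 * r' R0 - B * R0 \<le> y * r' y + M * r y * (\<rho>' (d y) - \<rho>' (d R0)) - B * y"
proof -
  define K where "K z = flux z - M * \<rho>' (d R0) * r z - B * z" for z
  have K_deriv: "(K has_real_derivative
      real M ^ 2 * r z / z + M * r' z * (\<rho>' (d z) - \<rho>' (d R0)) - B) (at z)"
    if "z \<in> {0<..<1}" for z
  proof -
    have "(K has_real_derivative (real M ^ 2 * r z / z + M * r' z * \<rho>' (d z))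
        - M * \<rho>' (d R0) * r' z - B * 1) (at z)"
      unfolding K_def[abs_def]
      by (intro DERIV_diff DERIV_cmult DERIV_ident flux_has_deriv r_has_deriv that)
    then show ?thesis by (simp add: algebra_simps)
  qed
  have "K R0 \<le> K y"
  proof (rule DERIV_nonpos_imp_decreasing_open[where f = K, OF y(2)])
    show "continuous_on {y..R0} K"
      using y R0 by (intro continuous_at_imp_continuous_on ballI DERIV_isCont[OF K_deriv]) auto
    fix z assume z: "y < z" "z < R0"
    with y R0 have z_in: "z \<in> {0<..<1}" by auto
    have "real M ^ 2 * (r z / z) \<le> B"
      unfolding B_def using r_div_le_sqrt_d[OF R0, of z] z y by (intro mult_left_mono) auto
    moreover have "\<rho>' (d z) \<le> \<rho>' (d R0)"
      using z y R0 by (intro rho'_mono d_mono) auto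
    then have "M * r' z * (\<rho>' (d z) - \<rho>' (d R0)) \<le> 0"
      using r'_pos[OF z_in] M_pos by (intro mult_nonneg_nonpos) auto
    ultimately have "real M ^ 2 * r z / z + M * r' z * (\<rho>' (d z) - \<rho>' (d R0)) - B \<le> 0"
      by simp
    with K_deriv[OF z_in] show "\<exists>l. (K has_real_derivative l) (at z) \<and> l \<le> 0" by blast
  qed
  then show ?thesis by (simp add: K_def flux_def algebra_simps)
qed

lemma r'_le_sqrt_d: assumes R0: "R0 \<in> {0<..<1}" shows "r' R0 \<le> real M ^ 2 * sqrt (d R0 / M)"
proof (rule ccontr)
  define B where "B = real M ^ 2 * sqrt (d R0 / M)"
  define k where "k = R0 * r' R0 - B * R0"
  assume "\<not> r' R0 \<le> real M ^ 2 * sqrt (d R0 / M)"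
  then have "0 < k" using R0 by (simp add: k_def B_def algebra_simps)
  have "k / y \<le> r' y" if y: "0 < y" "y < R0" for y
  proof -
    have "M * r y * (\<rho>' (d y) - \<rho>' (d R0)) \<le> 0"
      using y R0 r_pos[of y] M_pos d_mono[of y R0] rho'_mono
      by (intro mult_nonneg_nonpos) auto
    moreover have "0 \<le> B * y" using y d_pos[OF R0] by (simp add: B_def)
    ultimately have "k \<le> y * r' y"
      using flux_excess_ge[OF R0, of y] y by (simp add: k_def B_def)
    with y show ?thesis by (simp add: divide_le_eq mult.commute)
  qed
  then have "\<exists>x\<in>{0<..R0}. r x < 0"
  proof (intro unbounded_arbitrarily_small_if_deriv_ge_inverse[where f = r and f' = r' and A = k])
    show "continuous_on {0<..R0} r" using R0 by (intro continuous_on_subset[OF continuous_r]) auto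
  qed (use R0 \<open>0 < k\<close> r_has_deriv in auto)
  with R0 r_pos show False by fastforce
qed

lemma r'_tendsto_0: "(r' \<longlongrightarrow> 0) (at_right 0)"
proof (rule tendsto_sandwich[of "\<lambda>_. 0" _ _ "\<lambda>x. real M ^ 2 * sqrt (d x / M)"])
  show "\<forall>\<^sub>F x in at_right 0. 0 \<le> r' x"
    using eventually_at_right_real[OF zero_less_one] by eventually_elim (use r'_pos in force)
  show "\<forall>\<^sub>F x in at_right 0. r' x \<le> real M ^ 2 * sqrt (d x / M)"
    using eventually_at_right_real[OF zero_less_one] by eventually_elim (use r'_le_sqrt_d in force)
  show "((\<lambda>x. real M ^ 2 * sqrt (d x / M)) \<longlongrightarrow> 0) (at_right 0)"
    using tendsto_mult[OF tendsto_const sqrt_d_tendsto_0, of "real M ^ 2"] by simp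
qed simp

lemma r_div_tendsto_0: "((\<lambda>x. r x / x) \<longlongrightarrow> 0) (at_right 0)"
proof (rule tendsto_sandwich[of "\<lambda>_. 0" _ _ "\<lambda>x. sqrt (d x / M)"])
  show "\<forall>\<^sub>F x in at_right 0. 0 \<le> r x / x"
    using eventually_at_right_real[OF zero_less_one] by eventually_elim (use r_pos in force)
  show "\<forall>\<^sub>F x in at_right 0. r x / x \<le> sqrt (d x / M)"
    using eventually_at_right_real[OF zero_less_one] by eventually_elim (use r_div_le_sqrt_d in force)
qed (use sqrt_d_tendsto_0 in simp_all)

lemma C1_zero_at_0: "C1_zero_at_0 r"
proof -
  define g where "g x = (if x = 0 then 0 else r' x)" for x :: real
  have "continuous (at x within {0..1}) g" if x: "x \<in> {0..1}" for x
  proof (cases "x = 0")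
    case True
    have "\<forall>\<^sub>F y in at_right 0. r' y = g y" by (auto simp: eventually_at_filter g_def)
    with r'_tendsto_0 have "(g \<longlongrightarrow> 0) (at_right 0)" by (rule tendsto_cong[THEN iffD1, rotated])
    with True show ?thesis by (simp add: continuous_within at_within_Icc_at_right g_def)
  next
    case False
    with x have x_in: "x \<in> {0<..1}" by auto
    have "\<forall>\<^sub>F y in at x within {0<..1}. r' y = g y" by (auto simp: eventually_at_filter g_def)
    moreover have "(r' \<longlongrightarrow> r' x) (at x within {0<..1})"
      using continuous_on_Dr x_in by (simp add: continuous_on_eq_continuous_within continuous_within)
    ultimately have "(g \<longlongrightarrow> r' x) (at x within {0<..1})" by (rule tendsto_cong[THEN iffD1])
    then have "(g \<longlongrightarrow> g x) (at x within {0<..1})" using False by (simp add: g_def)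
    with x_in show ?thesis by (simp add: continuous_within at_within_Icc_eq_at_within_Ioc)
  qed
  then have "continuous_on {0..1} g" by (simp add: continuous_on_eq_continuous_within)
  moreover have "(r has_real_derivative g x) (at x within {0..1})" if "x \<in> {0..1}" for x
  proof (cases "x = 0")
    case True
    with r_div_tendsto_0 show ?thesis
      by (simp add: has_field_derivative_iff at_within_Icc_at_right r_0 g_def)
  next
    case False
    with that r_has_deriv_within show ?thesis by (simp add: g_def)
  qed
  moreover have "g 0 = 0" by (simp add: g_def)
  ultimately show ?thesis unfolding C1_zero_at_0_def by blast
qed

end

lemma bvp_solution_if_strong_solution:
  assumes "convex_on UNIV \<rho>" and "smooth_on UNIV \<rho>" and "M \<ge> 2" and "strong_solution \<rho> M r"
  shows "\<exists>D\<rho> Dr. bvp_solution \<rho> M r D\<rho> Dr"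
proof -
  obtain D\<rho> where D\<rho>: "\<forall>x\<in>UNIV. D\<rho> 0 x = \<rho> x"
      "\<forall>n. \<forall>x\<in>UNIV. (D\<rho> n has_real_derivative D\<rho> (Suc n) x) (at x within UNIV)"
    using assms(2) unfolding smooth_on_def by blast
  obtain Dr where Dr: "\<forall>x\<in>{0<..1}. Dr 0 x = r x"
      "\<forall>n. \<forall>x\<in>{0<..1}. (Dr n has_real_derivative Dr (Suc n) x) (at x within {0<..1})"
    using assms(4) unfolding strong_solution_def smooth_on_def by blast
  have "bvp_solution \<rho> M r D\<rho> Dr"
  proof (rule bvp_solution.intro)
    show "D\<rho> 0 = \<rho>" using D\<rho>(1) by (simp add: fun_eq_iff)
    show "(D\<rho> n has_real_derivative D\<rho> (Suc n) x) (at x)" for n x using D\<rho>(2) by simp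
    show "(Dr n has_real_derivative Dr (Suc n) x) (at x within {0<..1})" if "x \<in> {0<..1}" for n x
      using Dr(2) that by blast
  qed (use assms Dr(1) in \<open>simp_all add: strong_solution_def\<close>)
  then show ?thesis by blast
qed

text \<open>Only smoothness and convexity of \<open>\<rho>\<close> enter the argument.\<close>

theorem lemma2p6:
  fixes \<gamma> s0 \<kappa> :: real and \<rho> :: "real \<Rightarrow> real" and M :: nat and r :: "real \<Rightarrow> real"
  assumes "\<gamma> > 0" and "s0 \<ge> 0" and "\<kappa> \<ge> - \<gamma> * s0"
    and "smooth_on UNIV \<rho>" and "convex_on UNIV \<rho>"
    and "\<forall>s\<le>0. \<rho> s = 0" and "\<forall>s\<ge>s0. \<rho> s = \<gamma> * s + \<kappa>"
    and "M \<ge> 2"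
    and "strong_solution \<rho> M r"
  shows "(dfun M r \<longlongrightarrow> 0) (at_right 0) \<and>
    ((\<exists>\<delta>. 0 < \<delta> \<and> \<delta> < 1 \<and> (\<forall>R\<in>{0..\<delta>}. r R = 0)) \<longleftrightarrow>
       \<not> (\<forall>R\<in>{0<..1}. r R > 0 \<and> (\<exists>D>0. (r has_real_derivative D) (at R within {0..1})))) \<and>
    ((\<exists>\<delta>. 0 < \<delta> \<and> \<delta> < 1 \<and> (\<forall>R\<in>{0..\<delta>}. r R = 0)) \<longrightarrow> smooth_on {0..1} r) \<and>
    ((\<forall>R\<in>{0<..1}. r R > 0 \<and> (\<exists>D>0. (r has_real_derivative D) (at R within {0..1})))
       \<longrightarrow> C1_zero_at_0 r)"
proof -
  obtain D\<rho> Dr where "bvp_solution \<rho> M r D\<rho> Dr"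
    using bvp_solution_if_strong_solution assms(4,5,8,9) by blast
  then interpret bvp_solution \<rho> M r D\<rho> Dr .
  let ?delayed = "\<exists>\<delta>. 0 < \<delta> \<and> \<delta> < 1 \<and> (\<forall>R\<in>{0..\<delta>}. r R = 0)"
  let ?lifts_off = "\<forall>R\<in>{0<..1}. r R > 0 \<and> (\<exists>D>0. (r has_real_derivative D) (at R within {0..1}))"
  from delayed_or_positive show ?thesis
  proof
    assume ?delayed
    then obtain \<delta> where \<delta>: "0 < \<delta>" "\<delta> < 1" "\<forall>R\<in>{0..\<delta>}. r R = 0" by blast
    then have "r \<delta> = 0" "\<delta> \<in> {0<..1}" by auto
    then have "\<not> ?lifts_off" by force
    with \<delta> \<open>?delayed\<close> show ?thesis
      using smooth_on_if_delayed dfun_tendsto_0_if_delayed by blast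
  next
    assume "\<forall>x\<in>{0<..1}. 0 < r x"
    then interpret positive_bvp_solution \<rho> M r D\<rho> Dr by unfold_locales auto
    have "\<not> ?delayed"
    proof
      assume ?delayed
      then obtain \<delta> where "0 < \<delta>" "\<delta> < 1" "r \<delta> = 0" by auto
      with r_pos[of \<delta>] show False by simp
    qed
    with lifts_off dfun_tendsto_0 C1_zero_at_0 show ?thesis by blast
  qed
qed

end
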